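(* The map $\iota:S^2_+\to E(S^1)$, $p\mapsto f_p$, where $f_p(x)=d(p,x)$ for $x\in S^1$, is an isometric embedding. Moreover, $\iota(S^2_+)$ is the only subset of $E(S^1)$ that is isometric to $S^2_+$.
   Context: $S^2_+=\{(x,y,z)\in\mathbb{R}^3:x^2+y^2+z^2=1,\ z\ge0\}$ carries its intrinsic (geodesic) metric $d$. $S^1$ is its boundary circle $\{z=0\}$ with the restricted metric, which is the intrinsic metric of the circle of length $2\pi$. $E(S^1)$ is the set of $1$-Lipschitz functions $f:S^1\to\mathbb{R}$ such that $d(x,y)\le f(x)+f(y)$ for all $x,y\in S^1$ and, for each $x$, there is $y$ with $f(x)+f(y)=d(x,y)$. It is equipped with the sup norm $\|\cdot\|_\infty$. *)

theory Defs
  imports "HOL-Analysis.Analysis"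
begin

text \<open>Points of R^3 are vectors of type real^3; coordinates x, y, z are components 1, 2, 3.\<close>

definition S2p :: "(real^3) set" where
  "S2p = {p. norm p = 1 \<and> p $ 3 \<ge> 0}"

definition S1 :: "(real^3) set" where
  "S1 = {p. norm p = 1 \<and> p $ 3 = 0}"

text \<open>Intrinsic (great-circle) distance on the unit sphere; restricted to the closed
  upper hemisphere it is the intrinsic metric of the hemisphere, and restricted to the
  equator it is the intrinsic metric of the circle of length 2 pi.\<close>
definition gdist :: "real^3 \<Rightarrow> real^3 \<Rightarrow> real" where
  "gdist p q = arccos (p \<bullet> q)"

text \<open>Real functions on S1, represented extensionally (value 0 off S1).\<close>
definition E_S1 :: "(real^3 \<Rightarrow> real) set" where
  "E_S1 = {f. (\<forall>x. x \<notin> S1 \<longrightarrow> f x = 0)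
             \<and> (\<forall>x\<in>S1. \<forall>y\<in>S1. \<bar>f x - f y\<bar> \<le> gdist x y)
             \<and> (\<forall>x\<in>S1. \<forall>y\<in>S1. gdist x y \<le> f x + f y)
             \<and> (\<forall>x\<in>S1. \<exists>y\<in>S1. f x + f y = gdist x y)}"

definition supdist :: "(real^3 \<Rightarrow> real) \<Rightarrow> (real^3 \<Rightarrow> real) \<Rightarrow> real" where
  "supdist f g = (SUP x\<in>S1. \<bar>f x - g x\<bar>)"

definition iota :: "real^3 \<Rightarrow> (real^3 \<Rightarrow> real)" where
  "iota p = (\<lambda>x. if x \<in> S1 then gdist p x else 0)"

end

theory Submission
  imports Defs
begin

(* For p, q in the hemisphere the supremum of |d(p,x) - d(q,x)| over the equator is attained
   where the great circle from p through q meets the equator, so p \<mapsto> f_p is isometric.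
   For uniqueness let h be an isometry from the hemisphere onto A \<subseteq> E(S^1). Antipodal equator
   points are at distance pi, and since functions in E(S^1) take values in [0, pi], two of them
   at sup-distance pi force one to take the value 0 or pi, hence (via its partner point) to
   vanish somewhere; a function of E(S^1) vanishing at z is f_z. So h maps the equator to
   functions f_(sigma x) with sigma an isometry of the equator; sigma extends to an orthogonal
   map L of R^3 fixing the vertical axis, h p (sigma x) = d(p, x) = d(L p, sigma x) gives
   h p = f_(L p), and L maps the hemisphere onto itself. *)

lemma abs_inner_le_1:
  fixes p q :: "'a::real_inner"
  assumes "norm p = 1" "norm q = 1"
  shows "\<bar>p \<bullet> q\<bar> \<le> 1"
  using Cauchy_Schwarz_ineq2[of p q] assms by simp

lemma cos_arccos_add:
  assumes "\<bar>s\<bar> \<le> 1" "\<bar>t\<bar> \<le> 1"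
  shows "cos (arccos s + arccos t) = s * t - sqrt (1 - s\<^sup>2) * sqrt (1 - t\<^sup>2)"
  using assms by (simp add: cos_add sin_arccos)

lemma arccos_inner_triangle:
  fixes p q r :: "'a::real_inner"
  assumes p: "norm p = 1" and q: "norm q = 1" and r: "norm r = 1"
  shows "arccos (p \<bullet> r) \<le> arccos (p \<bullet> q) + arccos (q \<bullet> r)"
proof (cases "arccos (p \<bullet> q) + arccos (q \<bullet> r) \<le> pi")
  case False
  then show ?thesis using arccos_ubound[of "p \<bullet> r"] abs_inner_le_1[OF p r] by (simp add: abs_le_iff)
next
  case True
  define s t where "s = p \<bullet> q" and "t = q \<bullet> r"
  have st: "\<bar>s\<bar> \<le> 1" "\<bar>t\<bar> \<le> 1" "\<bar>p \<bullet> r\<bar> \<le> 1"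
    unfolding s_def t_def using abs_inner_le_1 p q r by auto
  have "norm (p - s *\<^sub>R q) = sqrt (1 - s\<^sup>2)" "norm (r - t *\<^sub>R q) = sqrt (1 - t\<^sup>2)"
    using p q r unfolding s_def t_def norm_eq_sqrt_inner
    by (simp_all add: inner_diff_left inner_diff_right inner_commute power2_eq_square norm_eq_1)
  moreover have "(p - s *\<^sub>R q) \<bullet> (r - t *\<^sub>R q) = p \<bullet> r - s * t"
    using q unfolding s_def t_def by (simp add: inner_diff_left inner_diff_right inner_commute norm_eq_1)
  ultimately have "s * t - sqrt (1 - s\<^sup>2) * sqrt (1 - t\<^sup>2) \<le> p \<bullet> r"
    using Cauchy_Schwarz_ineq2[of "p - s *\<^sub>R q" "r - t *\<^sub>R q"] by simp
  then have "cos (arccos s + arccos t) \<le> p \<bullet> r"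
    using cos_arccos_add[OF st(1,2)] by simp
  then have "arccos (p \<bullet> r) \<le> arccos (cos (arccos s + arccos t))"
    using st(3) by (intro arccos_le_arccos) auto
  also have "\<dots> = arccos s + arccos t"
    using True arccos_lbound st unfolding s_def t_def by (intro arccos_cos) (auto simp: abs_le_iff)
  finally show ?thesis unfolding s_def t_def .
qed

lemma arccos_inner_between:
  fixes p q x :: "'a::real_inner"
  assumes p: "norm p = 1" and q: "norm q = 1" and x: "norm x = 1"
    and q_eq: "q = \<alpha> *\<^sub>R x + \<beta> *\<^sub>R p" and "\<alpha> \<ge> 0" "\<beta> \<ge> 0"
  shows "arccos (p \<bullet> x) = arccos (p \<bullet> q) + arccos (q \<bullet> x)"
proof -
  define c where "c = p \<bullet> x"
  have c: "\<bar>c\<bar> \<le> 1" unfolding c_def using abs_inner_le_1 p x by auto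
  have pq: "p \<bullet> q = \<alpha> * c + \<beta>" and qx: "q \<bullet> x = \<alpha> + \<beta> * c"
    using p x unfolding q_eq c_def by (simp_all add: inner_add_right inner_add_left inner_commute norm_eq_1)
  have unit: "\<alpha>\<^sup>2 + \<beta>\<^sup>2 + 2 * \<alpha> * \<beta> * c = 1"
    using p q x unfolding q_eq c_def
    by (simp add: inner_add_left inner_add_right inner_commute power2_eq_square algebra_simps norm_eq_1)
  have "sqrt (1 - (p \<bullet> q)\<^sup>2) = \<alpha> * sqrt (1 - c\<^sup>2)" "sqrt (1 - (q \<bullet> x)\<^sup>2) = \<beta> * sqrt (1 - c\<^sup>2)"
  proof -
    have "1 - (p \<bullet> q)\<^sup>2 = \<alpha>\<^sup>2 * (1 - c\<^sup>2)" "1 - (q \<bullet> x)\<^sup>2 = \<beta>\<^sup>2 * (1 - c\<^sup>2)"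
      unfolding pq qx using unit by (simp_all add: power2_eq_square algebra_simps)
    then show "sqrt (1 - (p \<bullet> q)\<^sup>2) = \<alpha> * sqrt (1 - c\<^sup>2)" "sqrt (1 - (q \<bullet> x)\<^sup>2) = \<beta> * sqrt (1 - c\<^sup>2)"
      using assms(5,6) by (simp_all add: real_sqrt_mult)
  qed
  moreover have bounds: "\<bar>p \<bullet> q\<bar> \<le> 1" "\<bar>q \<bullet> x\<bar> \<le> 1"
    using abs_inner_le_1 p q x by auto
  ultimately have "cos (arccos (p \<bullet> q) + arccos (q \<bullet> x))
      = (\<alpha> * c + \<beta>) * (\<alpha> + \<beta> * c) - \<alpha> * \<beta> * (sqrt (1 - c\<^sup>2))\<^sup>2"
    using cos_arccos_add[OF bounds] by (simp add: pq qx power2_eq_square)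
  also have "\<dots> = c * (\<alpha>\<^sup>2 + \<beta>\<^sup>2 + 2 * \<alpha> * \<beta> * c)"
    using c abs_square_le_1[of c] by (simp add: power2_eq_square algebra_simps)
  finally have "cos (arccos (p \<bullet> q) + arccos (q \<bullet> x)) = c * (\<alpha>\<^sup>2 + \<beta>\<^sup>2 + 2 * \<alpha> * \<beta> * c)" .
  then have cos_sum: "cos (arccos (p \<bullet> q) + arccos (q \<bullet> x)) = c" using unit by simp
  have "- (q \<bullet> x) \<le> p \<bullet> q"
    using mult_nonneg_nonneg[of "\<alpha> + \<beta>" "1 + c"] assms(5,6) c unfolding pq qx
    by (simp add: algebra_simps abs_le_iff)
  then have "arccos (p \<bullet> q) \<le> pi - arccos (q \<bullet> x)"
    using arccos_le_arccos[of "- (q \<bullet> x)" "p \<bullet> q"] arccos_minus[of "q \<bullet> x"] bounds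
    by (simp add: abs_le_iff)
  then have "arccos (cos (arccos (p \<bullet> q) + arccos (q \<bullet> x))) = arccos (p \<bullet> q) + arccos (q \<bullet> x)"
    using arccos_lbound bounds by (intro arccos_cos) (auto simp: abs_le_iff)
  then show ?thesis using cos_sum c_def by simp
qed

lemma gdist_commute: "gdist p q = gdist q p"
  unfolding gdist_def by (simp add: inner_commute)

lemma gdist_self: "norm p = 1 \<Longrightarrow> gdist p p = 0"
  unfolding gdist_def by (simp add: norm_eq_1)

lemma gdist_nonneg: "norm p = 1 \<Longrightarrow> norm q = 1 \<Longrightarrow> 0 \<le> gdist p q"
  unfolding gdist_def using abs_inner_le_1[of p q] by (simp add: abs_le_iff arccos_lbound arccos_ubound)

lemma gdist_le_pi: "norm p = 1 \<Longrightarrow> norm q = 1 \<Longrightarrow> gdist p q \<le> pi"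
  unfolding gdist_def using abs_inner_le_1[of p q] by (simp add: abs_le_iff arccos_lbound arccos_ubound)

lemma gdist_triangle:
  "norm p = 1 \<Longrightarrow> norm q = 1 \<Longrightarrow> norm r = 1 \<Longrightarrow> gdist p r \<le> gdist p q + gdist q r"
  unfolding gdist_def by (rule arccos_inner_triangle)

lemma gdist_minus_right: "norm p = 1 \<Longrightarrow> norm x = 1 \<Longrightarrow> gdist p (- x) = pi - gdist p x"
  unfolding gdist_def using abs_inner_le_1[of p x] by (simp add: arccos_minus abs_le_iff)

lemma gdist_antipodal: "norm x = 1 \<Longrightarrow> gdist x (- x) = pi"
  using gdist_minus_right gdist_self by simp

lemma gdist_eq_iff_inner_eq:
  "norm p = 1 \<Longrightarrow> norm q = 1 \<Longrightarrow> norm p' = 1 \<Longrightarrow> norm q' = 1 \<Longrightarrow>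
    gdist p q = gdist p' q' \<longleftrightarrow> p \<bullet> q = p' \<bullet> q'"
  unfolding gdist_def using abs_inner_le_1[of p q] abs_inner_le_1[of p' q'] by (simp add: arccos_eq_iff)

lemma S1_imp_S2p: "x \<in> S1 \<Longrightarrow> x \<in> S2p"
  unfolding S1_def S2p_def by auto

lemma norm_S2p: "p \<in> S2p \<Longrightarrow> norm p = 1"
  unfolding S2p_def by auto

lemma norm_S1: "x \<in> S1 \<Longrightarrow> norm x = 1"
  unfolding S1_def by auto

lemma uminus_S1: "x \<in> S1 \<Longrightarrow> - x \<in> S1"
  unfolding S1_def by auto

lemma S1_nonempty: "S1 \<noteq> {}"
proof -
  have "vector [1, 0, 0] \<in> S1" unfolding S1_def by (simp add: norm_eq_1 inner_vec_def sum_3)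
  then show ?thesis by blast
qed

lemma compact_S1: "compact S1"
proof -
  have "S1 = sphere 0 1 \<inter> {x. x $ 3 = 0}" unfolding S1_def by auto
  moreover have "closed {x :: real^3. x $ 3 = 0}" by (intro closed_Collect_eq continuous_intros)
  ultimately show ?thesis by (metis compact_Int_closed compact_sphere)
qed

lemma iota_in_E_S1:
  assumes "p \<in> S2p"
  shows "iota p \<in> E_S1"
proof -
  have p: "norm p = 1" using assms norm_S2p by blast
  show ?thesis
    unfolding E_S1_def iota_def
  proof (intro CollectI conjI ballI allI impI)
    fix x y assume "x \<in> S1" "y \<in> S1"
    then have x: "norm x = 1" and y: "norm y = 1" using norm_S1 by auto
    show "\<bar>(if x \<in> S1 then gdist p x else 0) - (if y \<in> S1 then gdist p y else 0)\<bar> \<le> gdist x y"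
      using \<open>x \<in> S1\<close> \<open>y \<in> S1\<close> gdist_triangle[OF p x y] gdist_triangle[OF p y x]
        gdist_commute[of x y]
      by simp
    show "gdist x y \<le> (if x \<in> S1 then gdist p x else 0) + (if y \<in> S1 then gdist p y else 0)"
      using \<open>x \<in> S1\<close> \<open>y \<in> S1\<close> gdist_triangle[OF x p y] gdist_commute[of x p] by simp
  next
    fix x assume x: "x \<in> S1"
    have "gdist p x + gdist p (- x) = gdist x (- x)"
      using gdist_minus_right[OF p] gdist_antipodal norm_S1[OF x] by simp
    then show "\<exists>y\<in>S1. (if x \<in> S1 then gdist p x else 0) + (if y \<in> S1 then gdist p y else 0) = gdist x y"
      using x uminus_S1[OF x] by (intro bexI[of _ "- x"]) simp_all
  qed simp
qed

lemma supdist_eqI: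
  assumes "\<And>x. x \<in> S1 \<Longrightarrow> \<bar>f x - g x\<bar> \<le> c" and "x \<in> S1" "\<bar>f x - g x\<bar> = c"
  shows "supdist f g = c"
  unfolding supdist_def
proof (rule antisym)
  show "(SUP x\<in>S1. \<bar>f x - g x\<bar>) \<le> c" using assms(1) S1_nonempty by (intro cSUP_least) auto
  show "c \<le> (SUP x\<in>S1. \<bar>f x - g x\<bar>)"
  proof -
    have "bdd_above ((\<lambda>x. \<bar>f x - g x\<bar>) ` S1)" using assms(1) by (intro bdd_aboveI2)
    then have "\<bar>f x - g x\<bar> \<le> (SUP x\<in>S1. \<bar>f x - g x\<bar>)" by (rule cSUP_upper[OF assms(2)])
    then show ?thesis using assms(3) by simp
  qed
qed

lemma equator_point_attaining_gdist:
  assumes "p \<in> S2p" "q \<in> S2p"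
  obtains x where "x \<in> S1" "\<bar>gdist p x - gdist q x\<bar> = gdist p q"
proof -
  have p: "norm p = 1" and q: "norm q = 1" using assms norm_S2p by auto
  consider "p $ 3 = 0" | "p = q" | "p $ 3 > 0" "p \<noteq> q"
    using assms(1) unfolding S2p_def by force
  then show ?thesis
  proof cases
    case 1
    then have "p \<in> S1" using p unfolding S1_def by simp
    then show ?thesis using that gdist_self[OF p] gdist_commute[of p q] gdist_nonneg[OF q p] by simp
  next
    case 2
    then show ?thesis using that S1_nonempty gdist_self[OF p] by auto
  next
    case 3
    have q3: "q $ 3 \<ge> 0" using assms(2) unfolding S2p_def by simp
    \<comment> \<open>x is the point where the great circle from p through q meets the equator beyond q\<close>
    define w where "w = p $ 3 *\<^sub>R q - q $ 3 *\<^sub>R p"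
    have "w \<noteq> 0"
    proof
      assume "w = 0"
      then have eq: "p $ 3 *\<^sub>R q = q $ 3 *\<^sub>R p" unfolding w_def by simp
      have "norm (p $ 3 *\<^sub>R q) = norm (q $ 3 *\<^sub>R p)" using eq by simp
      then have "p $ 3 = q $ 3" using p q 3(1) q3 by simp
      then show False using eq 3 by simp
    qed
    define x where "x = w /\<^sub>R norm w"
    have x: "norm x = 1" using \<open>w \<noteq> 0\<close> unfolding x_def by simp
    have "x $ 3 = 0" unfolding x_def w_def by (simp add: algebra_simps)
    then have "x \<in> S1" using x unfolding S1_def by simp
    have q_eq: "q = (norm w / p $ 3) *\<^sub>R x + (q $ 3 / p $ 3) *\<^sub>R p"
      using \<open>w \<noteq> 0\<close> 3(1) unfolding x_def w_def by (simp add: algebra_simps divide_simps)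
    then have "gdist p x = gdist p q + gdist q x"
      unfolding gdist_def using 3(1) q3 by (intro arccos_inner_between[OF p q x q_eq]) auto
    then show ?thesis using that \<open>x \<in> S1\<close> gdist_nonneg[OF p q] by simp
  qed
qed

lemma supdist_iota:
  assumes "p \<in> S2p" "q \<in> S2p"
  shows "supdist (iota p) (iota q) = gdist p q"
proof -
  have p: "norm p = 1" and q: "norm q = 1" using assms norm_S2p by auto
  obtain x where "x \<in> S1" "\<bar>gdist p x - gdist q x\<bar> = gdist p q"
    using equator_point_attaining_gdist[OF assms] .
  moreover have "\<bar>gdist p y - gdist q y\<bar> \<le> gdist p q" if "y \<in> S1" for y
    using gdist_triangle[OF p q norm_S1[OF that]] gdist_triangle[OF q p norm_S1[OF that]]
      gdist_commute[of p q]
    by simp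
  ultimately show ?thesis unfolding iota_def by (intro supdist_eqI) auto
qed

lemma E_S1_nonneg: "f \<in> E_S1 \<Longrightarrow> x \<in> S1 \<Longrightarrow> 0 \<le> f x"
  unfolding E_S1_def using gdist_self[OF norm_S1] by force

lemma E_S1_le_pi:
  assumes "f \<in> E_S1" "x \<in> S1"
  shows "f x \<le> pi"
proof -
  obtain y where "y \<in> S1" "f x + f y = gdist x y" using assms unfolding E_S1_def by blast
  then show ?thesis
    using gdist_le_pi[OF norm_S1 norm_S1] E_S1_nonneg[OF assms(1)] assms(2) by fastforce
qed

lemma E_S1_eq_iota_if_zero:
  assumes f: "f \<in> E_S1" and y: "y \<in> S1" and "f y = 0"
  shows "f = iota y"
proof
  fix x
  show "f x = iota y x"
  proof (cases "x \<in> S1")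
    case True
    then have "\<bar>f x - f y\<bar> \<le> gdist x y" "gdist y x \<le> f y + f x" using f y unfolding E_S1_def by blast+
    then show ?thesis using \<open>f y = 0\<close> True gdist_commute[of x y] unfolding iota_def by simp
  next
    case False
    then show ?thesis using f unfolding E_S1_def iota_def by simp
  qed
qed

lemma E_S1_eq_iota_if_pi:
  assumes f: "f \<in> E_S1" and y: "y \<in> S1" and "f y = pi"
  obtains z where "z \<in> S1" "f = iota z"
proof -
  obtain z where z: "z \<in> S1" "f y + f z = gdist y z" using f y unfolding E_S1_def by blast
  then have "f z = 0"
    using gdist_le_pi[OF norm_S1[OF y] norm_S1[OF z(1)]] E_S1_nonneg[OF f z(1)] \<open>f y = pi\<close> by simp
  then show ?thesis using that z(1) E_S1_eq_iota_if_zero[OF f z(1)] by blast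
qed

lemma supdist_iota_right:
  assumes f: "f \<in> E_S1" and z: "z \<in> S1"
  shows "supdist f (iota z) = f z"
proof (rule supdist_eqI)
  show "\<bar>f y - iota z y\<bar> \<le> f z" if "y \<in> S1" for y
  proof -
    have "\<bar>f y - f z\<bar> \<le> gdist y z" "gdist z y \<le> f z + f y" using f z that unfolding E_S1_def by blast+
    then show ?thesis using that gdist_commute[of y z] unfolding iota_def by simp
  qed
  show "\<bar>f z - iota z z\<bar> = f z"
    using z gdist_self[OF norm_S1[OF z]] E_S1_nonneg[OF f z] unfolding iota_def by simp
qed (rule z)

lemma continuous_on_E_S1:
  assumes f: "f \<in> E_S1"
  shows "continuous_on S1 f"
  unfolding continuous_on_def
proof
  fix y assume y: "y \<in> S1"
  have "continuous_on S1 (\<lambda>x. arccos (x \<bullet> y))"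
    using abs_inner_le_1[OF norm_S1 norm_S1[OF y]]
    by (intro continuous_on_arccos continuous_intros) (auto simp: abs_le_iff)
  then have "((\<lambda>x. gdist x y) \<longlongrightarrow> gdist y y) (at y within S1)"
    using y unfolding continuous_on_def gdist_def by blast
  then have lim: "((\<lambda>x. gdist x y) \<longlongrightarrow> 0) (at y within S1)"
    using gdist_self[OF norm_S1[OF y]] by simp
  show "(f \<longlongrightarrow> f y) (at y within S1)"
  proof (rule metric_tendsto_imp_tendsto[OF lim])
    have "dist (f x) (f y) \<le> dist (gdist x y) 0" if "x \<in> S1" for x
      using f y that gdist_nonneg[OF norm_S1[OF that] norm_S1[OF y]]
      unfolding E_S1_def dist_real_def by simp
    then show "\<forall>\<^sub>F x in at y within S1. dist (f x) (f y) \<le> dist (gdist x y) 0"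
      by (auto simp: eventually_at_filter)
  qed
qed

lemma supdist_attained:
  assumes "f \<in> E_S1" "g \<in> E_S1"
  obtains y where "y \<in> S1" "supdist f g = \<bar>f y - g y\<bar>"
proof -
  have "continuous_on S1 (\<lambda>y. \<bar>f y - g y\<bar>)"
    using continuous_on_E_S1 assms by (intro continuous_intros)
  then obtain y where "y \<in> S1" "\<forall>x\<in>S1. \<bar>f x - g x\<bar> \<le> \<bar>f y - g y\<bar>"
    using continuous_attains_sup[OF compact_S1 S1_nonempty] by blast
  then show ?thesis using that supdist_eqI by blast
qed

lemma E_S1_eq_iota_if_supdist_pi:
  assumes f: "f \<in> E_S1" and g: "g \<in> E_S1" and "supdist f g = pi"
  obtains z where "z \<in> S1" "f = iota z"
proof -
  obtain y where y: "y \<in> S1" "\<bar>f y - g y\<bar> = pi"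
    using supdist_attained[OF f g] \<open>supdist f g = pi\<close> by metis
  then have "f y = 0 \<or> f y = pi"
    using E_S1_nonneg[OF f y(1)] E_S1_nonneg[OF g y(1)] E_S1_le_pi[OF f y(1)] E_S1_le_pi[OF g y(1)]
    by linarith
  then show ?thesis
    using that E_S1_eq_iota_if_zero[OF f y(1)] E_S1_eq_iota_if_pi[OF f y(1)] y(1) by blast
qed

lemma inner_real3: "(x :: real^3) \<bullet> y = x $ 1 * y $ 1 + x $ 2 * y $ 2 + x $ 3 * y $ 3"
  by (simp add: inner_vec_def sum_3)

lemma horizontal_orthonormal_expansion:
  fixes u v y :: "real^3"
  assumes "u $ 3 = 0" "v $ 3 = 0" "y $ 3 = 0" and "u \<bullet> u = 1" "v \<bullet> v = 1" "u \<bullet> v = 0"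
  shows "y = (y \<bullet> u) *\<^sub>R u + (y \<bullet> v) *\<^sub>R v"
proof -
  define w where "w = y - (y \<bullet> u) *\<^sub>R u - (y \<bullet> v) *\<^sub>R v"
  define D where "D = u $ 1 * v $ 2 - u $ 2 * v $ 1"
  \<comment> \<open>Lagrange's identity gives D^2 = 1, and D * w = 0 as w is orthogonal to u and v\<close>
  have "D\<^sup>2 = (u \<bullet> u) * (v \<bullet> v) - (u \<bullet> v)\<^sup>2"
    unfolding D_def inner_real3 using assms(1,2) by (simp add: power2_eq_square algebra_simps)
  then have "D \<noteq> 0" using assms(4-6) by auto
  have "w \<bullet> u = 0" "w \<bullet> v = 0" "w $ 3 = 0"
    using assms inner_commute[of v u] unfolding w_def by (simp_all add: inner_diff_left)
  moreover have "D * w $ 1 = v $ 2 * (w \<bullet> u) - u $ 2 * (w \<bullet> v)"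
    and "D * w $ 2 = u $ 1 * (w \<bullet> v) - v $ 1 * (w \<bullet> u)"
    unfolding D_def inner_real3 using assms(1,2) \<open>w $ 3 = 0\<close> by (simp_all add: algebra_simps)
  ultimately have "D * w $ 1 = 0" "D * w $ 2 = 0" by simp_all
  then have "w = 0"
    using \<open>D \<noteq> 0\<close> \<open>w $ 3 = 0\<close> by (simp add: vec_eq_iff forall_3)
  then show ?thesis unfolding w_def by (simp add: algebra_simps)
qed

lemma equator_isometry_extends:
  assumes maps: "\<And>x. x \<in> S1 \<Longrightarrow> \<sigma> x \<in> S1"
    and inner: "\<And>x y. x \<in> S1 \<Longrightarrow> y \<in> S1 \<Longrightarrow> \<sigma> x \<bullet> \<sigma> y = x \<bullet> y"
  obtains L where "orthogonal_transformation L" "\<And>p. L p $ 3 = p $ 3" "\<And>x. x \<in> S1 \<Longrightarrow> L x = \<sigma> x"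
proof -
  define e1 e2 e3 :: "real^3" where "e1 = vector [1, 0, 0]" and "e2 = vector [0, 1, 0]"
    and "e3 = vector [0, 0, 1]"
  have e1: "e1 \<in> S1" and e2: "e2 \<in> S1"
    unfolding e1_def e2_def S1_def by (simp_all add: norm_eq_1 inner_real3)
  define u v where "u = \<sigma> e1" and "v = \<sigma> e2"
  have "u \<in> S1" "v \<in> S1" unfolding u_def v_def using maps e1 e2 by auto
  then have u3: "u $ 3 = 0" and v3: "v $ 3 = 0" and uu: "u \<bullet> u = 1" and vv: "v \<bullet> v = 1"
    unfolding S1_def by (auto simp: norm_eq_1)
  have uv: "u \<bullet> v = 0" unfolding u_def v_def using inner[OF e1 e2] by (simp add: e1_def e2_def inner_real3)
  define L where "L p = p $ 1 *\<^sub>R u + p $ 2 *\<^sub>R v + p $ 3 *\<^sub>R e3" for p :: "real^3"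
  have "linear L" unfolding L_def by (intro linearI) (simp_all add: algebra_simps scaleR_add_left)
  moreover have "L p \<bullet> L q = p \<bullet> q" for p q
  proof -
    have "u \<bullet> e3 = 0" "v \<bullet> e3 = 0" "e3 \<bullet> e3 = 1"
      using u3 v3 by (simp_all add: e3_def inner_real3)
    then have "L p \<bullet> L q = p $ 1 * q $ 1 + p $ 2 * q $ 2 + p $ 3 * q $ 3"
      unfolding L_def using uu vv uv
      by (simp add: inner_add_left inner_add_right inner_commute algebra_simps)
    then show ?thesis by (simp add: inner_real3)
  qed
  ultimately have "orthogonal_transformation L" unfolding orthogonal_transformation_def by blast
  moreover have "L p $ 3 = p $ 3" for p unfolding L_def e3_def using u3 v3 by simp
  moreover have "L x = \<sigma> x" if x: "x \<in> S1" for x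
  proof -
    have "\<sigma> x \<in> S1" using maps x by blast
    then have "\<sigma> x = (\<sigma> x \<bullet> u) *\<^sub>R u + (\<sigma> x \<bullet> v) *\<^sub>R v"
      using u3 v3 uu vv uv unfolding S1_def by (intro horizontal_orthonormal_expansion) auto
    also have "\<dots> = L x"
      using inner[OF x e1] inner[OF x e2] x unfolding L_def u_def v_def S1_def
      by (simp add: e1_def e2_def inner_real3)
    finally show ?thesis ..
  qed
  ultimately show ?thesis using that by blast
qed

lemma orthogonal_transformation_image_level_set:
  fixes L :: "real^3 \<Rightarrow> real^3"
  assumes "orthogonal_transformation L" "\<And>p. L p $ 3 = p $ 3"
  shows "L ` {p. norm p = 1 \<and> P (p $ 3)} = {p. norm p = 1 \<and> P (p $ 3)}"
proof -
  have "surj L" using assms(1) by (rule orthogonal_transformation_surj)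
  then show ?thesis
    using assms orthogonal_transformation_norm[OF assms(1)] by (auto simp: image_iff) (metis surjD)
qed

lemma gdist_orthogonal_transformation:
  fixes L :: "real^3 \<Rightarrow> real^3"
  shows "orthogonal_transformation L \<Longrightarrow> gdist (L p) (L q) = gdist p q"
  unfolding gdist_def orthogonal_transformation_def by simp

lemma isometry_into_E_S1_on_equator:
  assumes hE: "\<And>p. p \<in> S2p \<Longrightarrow> h p \<in> E_S1"
    and iso: "\<forall>p\<in>S2p. \<forall>q\<in>S2p. supdist (h p) (h q) = gdist p q"
  obtains \<sigma> where "\<And>x. x \<in> S1 \<Longrightarrow> \<sigma> x \<in> S1" "\<And>x. x \<in> S1 \<Longrightarrow> h x = iota (\<sigma> x)"
    "\<And>x y. x \<in> S1 \<Longrightarrow> y \<in> S1 \<Longrightarrow> \<sigma> x \<bullet> \<sigma> y = x \<bullet> y"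
proof -
  have "\<exists>z. z \<in> S1 \<and> h x = iota z" if x: "x \<in> S1" for x
  proof -
    have "supdist (h x) (h (- x)) = pi"
      using iso S1_imp_S2p[OF x] S1_imp_S2p[OF uminus_S1[OF x]] gdist_antipodal[OF norm_S1[OF x]] by simp
    then obtain z where "z \<in> S1" "h x = iota z"
      using E_S1_eq_iota_if_supdist_pi hE S1_imp_S2p x uminus_S1 by blast
    then show ?thesis by blast
  qed
  then obtain \<sigma> where \<sigma>: "\<And>x. x \<in> S1 \<Longrightarrow> \<sigma> x \<in> S1" "\<And>x. x \<in> S1 \<Longrightarrow> h x = iota (\<sigma> x)"
    by metis
  moreover have "\<sigma> x \<bullet> \<sigma> y = x \<bullet> y" if x: "x \<in> S1" and y: "y \<in> S1" for x y
  proof -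
    have "gdist (\<sigma> x) (\<sigma> y) = supdist (h x) (h y)"
      using supdist_iota[OF S1_imp_S2p S1_imp_S2p] \<sigma> x y by simp
    also have "\<dots> = gdist x y" using iso S1_imp_S2p x y by simp
    finally show ?thesis
      using gdist_eq_iff_inner_eq[OF norm_S1[OF \<sigma>(1)[OF x]] norm_S1[OF \<sigma>(1)[OF y]] norm_S1[OF x] norm_S1[OF y]]
      by simp
  qed
  ultimately show ?thesis using that by blast
qed

lemma isometric_copy_of_S2p_eq_iota_image:
  assumes A: "A \<subseteq> E_S1" and h: "bij_betw h S2p A"
    and iso: "\<forall>p\<in>S2p. \<forall>q\<in>S2p. supdist (h p) (h q) = gdist p q"
  shows "A = iota ` S2p"
proof -
  have hE: "h p \<in> E_S1" if "p \<in> S2p" for p using A bij_betw_apply[OF h that] by blast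
  obtain \<sigma> where \<sigma>: "\<And>x. x \<in> S1 \<Longrightarrow> \<sigma> x \<in> S1" "\<And>x. x \<in> S1 \<Longrightarrow> h x = iota (\<sigma> x)"
    and \<sigma>_inner: "\<And>x y. x \<in> S1 \<Longrightarrow> y \<in> S1 \<Longrightarrow> \<sigma> x \<bullet> \<sigma> y = x \<bullet> y"
    using isometry_into_E_S1_on_equator[OF hE iso] by blast
  obtain L where L: "orthogonal_transformation L" "\<And>p. L p $ 3 = p $ 3"
    and L_\<sigma>: "\<And>x. x \<in> S1 \<Longrightarrow> L x = \<sigma> x"
    using equator_isometry_extends[of \<sigma>, OF \<sigma>(1) \<sigma>_inner] by blast
  have L_S1: "L ` S1 = S1" and L_S2p: "L ` S2p = S2p"
    unfolding S1_def S2p_def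
    using orthogonal_transformation_image_level_set[OF L, where P = "\<lambda>t. t = 0"]
      orthogonal_transformation_image_level_set[OF L, where P = "\<lambda>t. 0 \<le> t"]
    by simp_all
  have "h p = iota (L p)" if p: "p \<in> S2p" for p
  proof
    fix y
    show "h p y = iota (L p) y"
    proof (cases "y \<in> S1")
      case True
      then obtain x where x: "x \<in> S1" and y: "y = \<sigma> x" using L_S1 L_\<sigma> by force
      have "h p y = supdist (h p) (h x)"
        using supdist_iota_right[OF hE[OF p] \<sigma>(1)[OF x]] \<sigma>(2)[OF x] y by simp
      also have "\<dots> = gdist p x" using iso p S1_imp_S2p[OF x] by simp
      also have "\<dots> = gdist (L p) y"
        using gdist_orthogonal_transformation[OF L(1), of p x] L_\<sigma>[OF x] y by simp
      finally show ?thesis using True unfolding iota_def by simp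
    next
      case False
      then show ?thesis using hE[OF p] unfolding E_S1_def iota_def by simp
    qed
  qed
  then have "A = iota ` L ` S2p"
    using bij_betw_imp_surj_on[OF h] by (auto simp: image_image)
  then show ?thesis using L_S2p by simp
qed

theorem lemma2p9:
  shows "(\<forall>p\<in>S2p. iota p \<in> E_S1)
    \<and> (\<forall>p\<in>S2p. \<forall>q\<in>S2p. supdist (iota p) (iota q) = gdist p q)
    \<and> (\<forall>A. A \<subseteq> E_S1 \<longrightarrow>
          (\<exists>h. bij_betw h S2p A \<and> (\<forall>p\<in>S2p. \<forall>q\<in>S2p. supdist (h p) (h q) = gdist p q))
          \<longrightarrow> A = iota ` S2p)"
  using iota_in_E_S1 supdist_iota isometric_copy_of_S2p_eq_iota_image by blast

end
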